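(* Let $X_1,X_2,\ldots$ be i.i.d. Rademacher random variables ($\mathbb{P}(X_i=1)=\mathbb{P}(X_i=-1)=1/2$), $S_0=0$, and $S_i=S_{i-1}+X_i$ (the simple symmetric random walk). Let $\alpha\ge1$ and $1/\beta=(\alpha-1)/\alpha$. For $i\ge1$ and $x\in\mathrm{supp}(S_{i-1})$, $$2^{\frac1\beta\left(-1+i\left(1-h_2\left(\frac{i+1}{2i}\right)\right)+\frac12\log_2\left(\frac\pi2\cdot\frac{i^2-1}{i}\right)\right)}\le H_\alpha^{1/\alpha}\left(\mathcal{P}_{S_i|S_{i-1}=x}\,\middle\|\,\mathcal{P}_{S_i}\right)\le 2^{\frac{i}{\beta}-1+\frac1\alpha},$$ where $h_2(x)=-x\log_2x-(1-x)\log_2(1-x)$ is the binary entropy. Consequently, for $n\ge2$, $$\frac{n-2}{4\beta}\le\log_2 H_\alpha^{1/\alpha}\left(\mathcal{P}_{S^n}\,\middle\|\,\mathcal{P}_{\bigotimes_{j=1}^n S_j}\right)\le\frac{n(n-1)}{2\beta}.$$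
   Context: For probability measures $\nu\ll\mu$, $H_\alpha(\nu\|\mu)=\int(d\nu/d\mu)^\alpha d\mu$. $\mathcal{P}_{S^n}$ is the joint law of $(S_1,\ldots,S_n)$, $\mathcal{P}_{S_i}$ the law of $S_i$, $\mathcal{P}_{S_i|S_{i-1}=x}$ the conditional law of $S_i$ given $S_{i-1}=x$, and $\mathcal{P}_{\bigotimes_{j=1}^n S_j}$ the product of the marginal laws of $S_1,\ldots,S_n$. *)

theory Defs
  imports "HOL-Probability.Probability"
begin

definition rademacher :: "int pmf" where
  "rademacher = pmf_of_set {-1, 1}"

text \<open>Joint law of the i.i.d. steps; index k < n stands for X_(k+1).\<close>
definition steps :: "nat \<Rightarrow> (nat \<Rightarrow> int) pmf" where
  "steps n = Pi_pmf {..<n} 0 (\<lambda>_. rademacher)"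

definition walk :: "(nat \<Rightarrow> int) \<Rightarrow> nat \<Rightarrow> int" where
  "walk X j = (\<Sum>k<j. X k)"

definition S_law :: "nat \<Rightarrow> int pmf" where
  "S_law i = map_pmf (\<lambda>X. walk X i) (steps i)"

definition cond_step_law :: "nat \<Rightarrow> int \<Rightarrow> int pmf" where
  "cond_step_law i x =
     map_pmf snd (cond_pmf (map_pmf (\<lambda>X. (walk X (i - 1), walk X i)) (steps i)) {p. fst p = x})"

definition joint_law :: "nat \<Rightarrow> (nat \<Rightarrow> int) pmf" where
  "joint_law n = map_pmf (\<lambda>X j. if j \<in> {1..n} then walk X j else 0) (steps n)"

definition prod_marg_law :: "nat \<Rightarrow> (nat \<Rightarrow> int) pmf" where
  "prod_marg_law n = Pi_pmf {1..n} 0 (\<lambda>j. S_law j)"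

definition H_div :: "real \<Rightarrow> 'a measure \<Rightarrow> 'a measure \<Rightarrow> real" where
  "H_div \<alpha> \<nu> \<mu> = (\<integral>x. (enn2real (RN_deriv \<mu> \<nu> x)) powr \<alpha> \<partial>\<mu>)"

definition h2 :: "real \<Rightarrow> real" where
  "h2 x = - x * log 2 x - (1 - x) * log 2 (1 - x)"

end

(* Both parts come down to bounding point masses of the walk. For finitely supported laws with
   supp nu <= supp mu, H_alpha(nu || mu) = sum_y nu(y) (nu(y)/mu(y))^(alpha-1), so bounds
   r <= nu/mu <= R on supp nu give r^(alpha-1) <= H_alpha <= R^(alpha-1).

   Given S_(i-1) = x, S_i is uniform on {x-1, x+1}, and every point mass of S_i is at least 2^-i,
   which gives the upper bound. For the lower bound, AM-GM gives
   H_alpha >= (4 mu(x-1) mu(x+1))^((1-alpha)/2), and Wallis' product gives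
   P(S_(2m) = 0)^2 <= 1/(pi (m + 1/4)), hence mu(x-1) mu(x+1) <= 2/(pi (i+1)); Bernoulli's
   inequality (1 - 1/i^2)^i (1 + 1/i) <= 1 turns this into the binary-entropy exponent.

   The law of (S_1, ..., S_n) gives mass 2^-n to each path, while the product of the marginals
   gives it a mass between 2^(-n(n+1)/2) and (1/4)(3/8)^(n-2), so the ratio of the two lies
   between (4/3)^(n-2) >= 2^((n-2)/4) and 2^(n(n-1)/2). *)

theory Submission
  imports Defs "HOL-Real_Asymp.Real_Asymp"
begin

section \<open>Hellinger integrals of finitely supported distributions\<close>

lemma RN_deriv_measure_pmf:
  assumes "set_pmf p \<subseteq> set_pmf q"
  shows "AE x in measure_pmf q. RN_deriv (measure_pmf q) (measure_pmf p) x = ennreal (pmf p x / pmf q x)"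
proof -
  have "ennreal (pmf q x) * ennreal (pmf p x / pmf q x) = ennreal (pmf p x)" for x
  proof (cases "pmf q x = 0")
    case True
    then have "pmf p x = 0" using assms by (auto simp: set_pmf_eq)
    then show ?thesis by simp
  qed (simp add: ennreal_mult'[symmetric])
  then have "density (measure_pmf q) (\<lambda>x. ennreal (pmf p x / pmf q x)) = measure_pmf p"
    unfolding measure_pmf_eq_density by (simp add: density_density_eq)
  then have "AE x in measure_pmf q. ennreal (pmf p x / pmf q x) = RN_deriv (measure_pmf q) (measure_pmf p) x"
    by (intro measure_pmf.RN_deriv_unique) simp
  then show ?thesis by (simp add: eq_commute)
qed

lemma H_div_measure_pmf:
  assumes "finite (set_pmf q)" "set_pmf p \<subseteq> set_pmf q"
  shows "H_div a (measure_pmf p) (measure_pmf q)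
    = (\<Sum>y\<in>set_pmf p. pmf p y * (pmf p y / pmf q y) powr (a - 1))"
proof -
  have "H_div a (measure_pmf p) (measure_pmf q) = (\<integral>x. (pmf p x / pmf q x) powr a \<partial>measure_pmf q)"
    unfolding H_div_def using RN_deriv_measure_pmf[OF assms(2)]
    by (intro integral_cong_AE) (auto elim!: eventually_mono)
  also have "\<dots> = (\<Sum>y\<in>set_pmf p. pmf q y * (pmf p y / pmf q y) powr a)"
    using assms by (subst integral_measure_pmf[of "set_pmf p"]) (auto intro: finite_subset simp: set_pmf_iff)
  also have "\<dots> = (\<Sum>y\<in>set_pmf p. pmf p y * (pmf p y / pmf q y) powr (a - 1))"
  proof (rule sum.cong)
    fix y assume "y \<in> set_pmf p"
    then have "0 < pmf p y" "0 < pmf q y" using assms(2) by (auto simp: pmf_positive)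
    then show "pmf q y * (pmf p y / pmf q y) powr a = pmf p y * (pmf p y / pmf q y) powr (a - 1)"
      by (simp add: powr_diff field_simps)
  qed simp
  finally show ?thesis .
qed

lemma H_div_measure_pmf_root_le:
  assumes "finite (set_pmf q)" "set_pmf p \<subseteq> set_pmf q" "1 \<le> \<alpha>"
    and R: "\<And>y. y \<in> set_pmf p \<Longrightarrow> pmf p y / pmf q y \<le> R"
  shows "H_div \<alpha> (measure_pmf p) (measure_pmf q) powr (1 / \<alpha>) \<le> R powr ((\<alpha> - 1) / \<alpha>)"
proof -
  have fin: "finite (set_pmf p)" using assms(1,2) by (rule finite_subset[rotated])
  have "H_div \<alpha> (measure_pmf p) (measure_pmf q) \<le> (\<Sum>y\<in>set_pmf p. pmf p y * R powr (\<alpha> - 1))"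
    unfolding H_div_measure_pmf[OF assms(1,2)]
    using assms(3) R by (intro sum_mono mult_left_mono powr_mono2) auto
  also have "\<dots> = R powr (\<alpha> - 1)"
    using fin by (simp add: sum_distrib_right[symmetric] sum_pmf_eq_1)
  finally have "H_div \<alpha> (measure_pmf p) (measure_pmf q) powr (1 / \<alpha>) \<le> (R powr (\<alpha> - 1)) powr (1 / \<alpha>)"
    using assms(3) by (intro powr_mono2) (auto simp: H_div_measure_pmf[OF assms(1,2)] intro!: sum_nonneg)
  then show ?thesis by (simp add: powr_powr)
qed

lemma H_div_measure_pmf_root_ge:
  assumes "finite (set_pmf q)" "set_pmf p \<subseteq> set_pmf q" "1 \<le> \<alpha>" "0 < r"
    and r: "\<And>y. y \<in> set_pmf p \<Longrightarrow> r \<le> pmf p y / pmf q y"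
  shows "r powr ((\<alpha> - 1) / \<alpha>) \<le> H_div \<alpha> (measure_pmf p) (measure_pmf q) powr (1 / \<alpha>)"
proof -
  have fin: "finite (set_pmf p)" using assms(1,2) by (rule finite_subset[rotated])
  have "r powr (\<alpha> - 1) = (\<Sum>y\<in>set_pmf p. pmf p y * r powr (\<alpha> - 1))"
    using fin by (simp add: sum_distrib_right[symmetric] sum_pmf_eq_1)
  also have "\<dots> \<le> H_div \<alpha> (measure_pmf p) (measure_pmf q)"
    unfolding H_div_measure_pmf[OF assms(1,2)]
    using assms(3,4) r by (intro sum_mono mult_left_mono powr_mono2) auto
  finally have "(r powr (\<alpha> - 1)) powr (1 / \<alpha>) \<le> H_div \<alpha> (measure_pmf p) (measure_pmf q) powr (1 / \<alpha>)"
    using assms(3) by (intro powr_mono2) auto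
  then show ?thesis by (simp add: powr_powr)
qed

section \<open>The simple random walk\<close>

lemma set_pmf_rademacher [simp]: "set_pmf rademacher = {-1, 1}"
  unfolding rademacher_def by simp

lemma pmf_rademacher: "pmf rademacher y = (if y \<in> {-1, 1} then 1/2 else 0)"
  unfolding rademacher_def by (simp add: pmf_of_set)

lemma walk_Suc: "walk X (Suc n) = walk X n + X n"
  unfolding walk_def by simp

lemma steps_Suc:
  "steps (Suc n) = map_pmf (\<lambda>(y, X). X(n := y)) (pair_pmf rademacher (steps n))"
proof -
  have "{..<Suc n} = insert n {..<n}" by auto
  then show ?thesis unfolding steps_def by (simp add: Pi_pmf_insert)
qed

lemma walk_steps_Suc:
  "map_pmf (\<lambda>X. (walk X n, walk X (Suc n))) (steps (Suc n))
     = map_pmf (\<lambda>(y, s). (s, s + y)) (pair_pmf rademacher (S_law n))"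
proof -
  have "walk (X(n := y)) n = walk X n" for X y
    unfolding walk_def by (intro sum.cong) auto
  then show ?thesis
    unfolding S_law_def steps_Suc pair_map_pmf2 map_pmf_comp
    by (intro map_pmf_cong) (auto simp: walk_Suc)
qed

lemma S_law_Suc: "S_law (Suc n) = map_pmf (\<lambda>(y, s). s + y) (pair_pmf rademacher (S_law n))"
proof -
  have "S_law (Suc n) = map_pmf snd (map_pmf (\<lambda>X. (walk X n, walk X (Suc n))) (steps (Suc n)))"
    unfolding S_law_def map_pmf_comp by simp
  then show ?thesis unfolding walk_steps_Suc map_pmf_comp by (simp add: case_prod_unfold)
qed

lemma step_in_set_S_law_Suc:
  assumes "x \<in> set_pmf (S_law n)" "y \<in> {-1, 1}"
  shows "x + y \<in> set_pmf (S_law (Suc n))"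
  unfolding S_law_Suc using assms by (auto intro!: rev_image_eqI[of "(y, x)"])

lemma neighbours_in_set_S_law_Suc:
  assumes "x \<in> set_pmf (S_law n)"
  shows "x - 1 \<in> set_pmf (S_law (Suc n))" "x + 1 \<in> set_pmf (S_law (Suc n))"
  using step_in_set_S_law_Suc[OF assms, of "-1"] step_in_set_S_law_Suc[OF assms, of 1] by simp_all

lemma walk_in_set_pmf_S_law: "(\<And>k. k < j \<Longrightarrow> X k \<in> {-1, 1}) \<Longrightarrow> walk X j \<in> set_pmf (S_law j)"
proof (induction j)
  case 0
  then show ?case by (simp add: walk_def S_law_def steps_def)
next
  case (Suc j)
  then show ?case unfolding walk_Suc by (intro step_in_set_S_law_Suc) auto
qed

lemma cond_pmf_pair_pmf_snd:
  assumes "x \<in> set_pmf q"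
  shows "cond_pmf (pair_pmf p q) {z. snd z = x} = pair_pmf p (return_pmf x)"
proof (rule pmf_eqI)
  fix z
  have "measure_pmf.prob (pair_pmf p q) {z. snd z = x}
      = measure_pmf.prob (map_pmf snd (pair_pmf p q)) {x}"
    by (simp add: vimage_def)
  also have "\<dots> = pmf q x" by (simp add: map_snd_pair_pmf measure_pmf_single)
  finally have "measure_pmf.prob (pair_pmf p q) {z. snd z = x} = pmf q x" .
  moreover have "pmf q x > 0" using assms by (simp add: pmf_positive)
  moreover have "set_pmf (pair_pmf p q) \<inter> {z. snd z = x} \<noteq> {}"
    using assms set_pmf_not_empty[of p] by auto
  ultimately show "pmf (cond_pmf (pair_pmf p q) {z. snd z = x}) z = pmf (pair_pmf p (return_pmf x)) z"
    by (cases z) (auto simp: pmf_cond pmf_pair)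
qed

lemma cond_step_law_Suc:
  assumes "x \<in> set_pmf (S_law n)"
  shows "cond_step_law (Suc n) x = map_pmf (\<lambda>y. x + y) rademacher"
proof -
  let ?f = "\<lambda>(y::int, s::int). (s, s + y)" and ?P = "pair_pmf rademacher (S_law n)"
  have fibre: "?f -` {z. fst z = x} = {z. snd z = x}" by auto
  have "(1, x) \<in> set_pmf ?P \<inter> ?f -` {z. fst z = x}"
    using assms by simp
  then have "cond_pmf (map_pmf ?f ?P) {z. fst z = x} = map_pmf ?f (cond_pmf ?P {z. snd z = x})"
    unfolding fibre[symmetric] by (intro cond_map_pmf) blast
  also have "\<dots> = map_pmf ?f (pair_pmf rademacher (return_pmf x))"
    using assms by (simp add: cond_pmf_pair_pmf_snd)
  finally show ?thesis
    unfolding cond_step_law_def diff_Suc_1 walk_steps_Suc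
    by (simp add: map_pmf_comp pair_return_pmf2 ac_simps)
qed

lemma rademacher_eq_map_bernoulli:
  "rademacher = map_pmf (\<lambda>b. if b then 1 else -1) (bernoulli_pmf (1/2))"
proof -
  have "(\<lambda>b. if b then 1 else -1 :: int) ` UNIV = {-1, 1}" by (auto simp: UNIV_bool)
  then show ?thesis
    unfolding rademacher_def bernoulli_pmf_half_conv_pmf_of_set
    by (subst map_pmf_of_set_inj) (auto simp: inj_on_def)
qed

lemma S_law_eq_map_binomial: "S_law n = map_pmf (\<lambda>k. 2 * int k - int n) (binomial_pmf n (1/2))"
proof (induction n)
  case 0
  have "S_law 0 = return_pmf 0" unfolding S_law_def walk_def by simp
  then show ?case by (simp add: binomial_pmf_0)
next
  case (Suc n)
  show ?case
    unfolding S_law_Suc Suc.IH rademacher_eq_map_bernoulli binomial_pmf_Suc[of "1/2" n, simplified]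
    by (simp add: map_pmf_def pair_pmf_def bind_assoc_pmf bind_return_pmf algebra_simps;
        intro bind_pmf_cong refl; simp)
qed

lemma set_pmf_S_law: "set_pmf (S_law n) = (\<lambda>k. 2 * int k - int n) ` {..n}"
  unfolding S_law_eq_map_binomial by simp

lemma finite_set_pmf_S_law [simp]: "finite (set_pmf (S_law n))"
  unfolding set_pmf_S_law by simp

lemma pmf_S_law:
  assumes "k \<le> n"
  shows "pmf (S_law n) (2 * int k - int n) = real (n choose k) / 2 ^ n"
proof -
  have "inj (\<lambda>k. 2 * int k - int n)" by (auto simp: inj_def)
  then have "pmf (S_law n) (2 * int k - int n) = pmf (binomial_pmf n (1/2)) k"
    unfolding S_law_eq_map_binomial by (rule pmf_map_inj')
  also have "\<dots> = real (n choose k) * (1/2) ^ (k + (n - k))"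
    by (simp add: power_add)
  finally show ?thesis using assms by (simp add: power_divide)
qed

lemma set_pmf_S_lawE:
  assumes "y \<in> set_pmf (S_law n)"
  obtains k where "k \<le> n" "y = 2 * int k - int n" "pmf (S_law n) y = real (n choose k) / 2 ^ n"
  using assms pmf_S_law unfolding set_pmf_S_law by auto

lemma pmf_S_law_ge:
  assumes "y \<in> set_pmf (S_law n)"
  shows "1 / 2 ^ n \<le> pmf (S_law n) y"
proof -
  obtain k where "k \<le> n" "pmf (S_law n) y = real (n choose k) / 2 ^ n"
    using assms by (rule set_pmf_S_lawE)
  then show ?thesis by (simp add: divide_right_mono Suc_leI)
qed

section \<open>Largest point masses\<close>

(* P(S_(2m) = 0), the largest point mass of both S_(2m-1) and S_(2m) *)
definition central_prob :: "nat \<Rightarrow> real" where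
  "central_prob m = real ((2 * m) choose m) / 4 ^ m"

lemma central_prob_pos: "0 < central_prob m"
  unfolding central_prob_def by simp

lemma central_binomial_Suc: "Suc m * (2 * Suc m choose Suc m) = 2 * Suc (2 * m) * ((2 * m) choose m)"
proof -
  have "Suc m * (Suc (Suc (2 * m)) choose Suc m) = Suc (Suc (2 * m)) * (Suc (2 * m) choose m)"
    by (rule Suc_times_binomial)
  moreover have "Suc m * (Suc (2 * m) choose Suc m) = Suc (2 * m) * (2 * m choose m)"
    by (rule Suc_times_binomial)
  moreover have "Suc (2 * m) choose Suc m = Suc (2 * m) choose m"
    using central_binomial_odd[of "Suc (2 * m)"] by simp
  ultimately show ?thesis
    by (metis add_Suc add_Suc_right mult.assoc mult_2)
qed

lemma central_prob_Suc: "(2 * real m + 2) * central_prob (Suc m) = (2 * real m + 1) * central_prob m"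
proof -
  define C0 C2 where "C0 = real ((2 * m) choose m)" and "C2 = real (2 * Suc m choose Suc m)"
  have "real (Suc m * (2 * Suc m choose Suc m)) = real (2 * Suc (2 * m) * ((2 * m) choose m))"
    by (simp only: central_binomial_Suc)
  then have C2: "(real m + 1) * C2 = 2 * (2 * m + 1) * C0"
    unfolding C0_def C2_def by (simp del: binomial_Suc_Suc add: algebra_simps)
  have "(2 * real m + 2) * central_prob (Suc m) = ((real m + 1) * C2) / (2 * 4 ^ m)"
    unfolding central_prob_def C2_def by (simp del: binomial_Suc_Suc add: field_simps)
  also have "\<dots> = (2 * real m + 1) * central_prob m"
    unfolding C2 central_prob_def C0_def by (simp add: field_simps)
  finally show ?thesis .
qed

lemma central_prob_2: "central_prob 2 = 3/8"
proof -
  have "(4::nat) choose 2 = 6" by (simp add: numeral_eq_Suc)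
  then show ?thesis unfolding central_prob_def by simp
qed

lemma decseq_central_prob: "decseq central_prob"
proof (rule decseq_SucI)
  fix m
  have "(2 * m + 2) * central_prob (Suc m) \<le> (2 * m + 2) * central_prob m"
    using central_prob_Suc[of m] central_prob_pos[of m] by simp
  then show "central_prob (Suc m) \<le> central_prob m" by simp
qed

lemma central_prob_sq_mult_wallis:
  "central_prob m ^ 2 * (2 * real m + 1) * (\<Prod>k=1..m. 4 * real k ^ 2 / (4 * real k ^ 2 - 1)) = 1"
proof (induction m)
  case 0
  then show ?case by (simp add: central_prob_def)
next
  case (Suc m)
  define W where "W m = (\<Prod>k=1..m. 4 * real k ^ 2 / (4 * real k ^ 2 - 1))" for m
  define x y z where "x = 2 * real m + 1" and "y = 2 * real m + 2" and "z = 2 * real m + 3"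
  have pos: "x > 0" "y > 0" "z > 0" unfolding x_def y_def z_def by auto
  have "W (Suc m) = W m * (y ^ 2 / (x * z))"
  proof -
    have "4 * (real m + 1) ^ 2 = y ^ 2" "4 * (real m + 1) ^ 2 - 1 = x * z"
      unfolding x_def y_def z_def by (simp_all add: algebra_simps power2_eq_square)
    then show ?thesis unfolding W_def by (simp add: prod.nat_ivl_Suc' add.commute)
  qed
  moreover have "central_prob (Suc m) = x * central_prob m / y"
    using central_prob_Suc[of m] pos unfolding x_def y_def by (simp add: field_simps)
  moreover have "2 * real (Suc m) + 1 = z" unfolding z_def by simp
  ultimately have "central_prob (Suc m) ^ 2 * (2 * real (Suc m) + 1) * W (Suc m)
      = (x * central_prob m / y) ^ 2 * z * (W m * (y ^ 2 / (x * z)))"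
    by simp
  also have "\<dots> = central_prob m ^ 2 * x * W m"
    using pos by (simp add: field_simps power2_eq_square)
  also have "\<dots> = 1"
    using Suc.IH unfolding x_def W_def .
  finally show ?case unfolding W_def .
qed

lemma central_prob_sq_le: "central_prob m ^ 2 \<le> 1 / (pi * (m + 1/4))"
proof -
  define a where "a m = (m + 1/4) * central_prob m ^ 2" for m
  have "incseq a"
  proof (rule incseq_SucI)
    fix m
    let ?c = "central_prob m ^ 2"
    have c': "central_prob (Suc m) = (2 * m + 1) * central_prob m / (2 * m + 2)"
      using central_prob_Suc[of m] by (simp add: field_simps)
    have "(real m + 1/4) * (2 * real m + 2) ^ 2 \<le> (real m + 5/4) * (2 * real m + 1) ^ 2"
      by (simp add: algebra_simps power2_eq_square)
    then have "(real m + 1/4) * (2 * real m + 2) ^ 2 * ?c / (2 * real m + 2) ^ 2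
        \<le> (real m + 5/4) * (2 * real m + 1) ^ 2 * ?c / (2 * real m + 2) ^ 2"
      by (intro divide_right_mono mult_right_mono) auto
    then show "a m \<le> a (Suc m)"
      unfolding a_def c' by (simp add: power_mult_distrib power_divide ac_simps)
  qed
  moreover have "a \<longlonglongrightarrow> (1/2) / (pi/2)"
  proof -
    define W where "W m = (\<Prod>k=1..m. 4 * real k ^ 2 / (4 * real k ^ 2 - 1))" for m
    have "(\<lambda>m. (real m + 1/4) / (2 * real m + 1)) \<longlonglongrightarrow> 1/2" by real_asymp
    then have "(\<lambda>m. (real m + 1/4) / (2 * real m + 1) / W m) \<longlonglongrightarrow> (1/2) / (pi/2)"
      unfolding W_def by (rule tendsto_divide[OF _ wallis]) auto
    moreover have "(real m + 1/4) / (2 * real m + 1) / W m = a m" for m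
    proof -
      have "inverse (W m) = central_prob m ^ 2 * (2 * real m + 1)"
        unfolding W_def by (rule inverse_unique, rule mult.commute[THEN trans], rule central_prob_sq_mult_wallis)
      then show ?thesis unfolding a_def divide_inverse[of _ "W m"] by (simp add: field_simps)
    qed
    ultimately show ?thesis by simp
  qed
  ultimately have "a m \<le> 1 / pi" by (simp add: incseq_le)
  have "central_prob m ^ 2 = a m / (real m + 1/4)"
    unfolding a_def by (simp add: add_pos_nonneg)
  also have "\<dots> \<le> (1 / pi) / (real m + 1/4)"
    using \<open>a m \<le> 1 / pi\<close> by (rule divide_right_mono) simp
  finally show ?thesis by simp
qed

lemma binomial_middle_div_power: "real (n choose (n div 2)) / 2 ^ n = central_prob ((n + 1) div 2)"
proof (cases "even n")
  case True
  then obtain m where "n = 2 * m" by blast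
  then show ?thesis unfolding central_prob_def by (simp add: power_mult)
next
  case False
  then obtain m where n: "n = 2 * m + 1" by (blast elim: oddE)
  have "(2 * m + 2) choose (m + 1) = 2 * ((2 * m + 1) choose m)"
    using central_binomial_odd[of "2 * m + 1"] by simp
  then show ?thesis unfolding central_prob_def n by (simp add: power_mult)
qed

lemma pmf_S_law_le_central_prob: "pmf (S_law n) y \<le> central_prob ((n + 1) div 2)"
proof (cases "y \<in> set_pmf (S_law n)")
  case True
  then obtain k where "pmf (S_law n) y = real (n choose k) / 2 ^ n"
    by (rule set_pmf_S_lawE)
  also have "\<dots> \<le> real (n choose (n div 2)) / 2 ^ n"
    by (simp add: divide_right_mono binomial_maximum)
  finally show ?thesis by (simp add: binomial_middle_div_power)
qed (simp add: set_pmf_iff less_imp_le central_prob_pos)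

lemma pmf_S_law_even_le:
  assumes "y \<noteq> 0"
  shows "pmf (S_law (2 * m)) y \<le> central_prob m * m / (m + 1)"
proof (cases "y \<in> set_pmf (S_law (2 * m))")
  case True
  then obtain k where k: "k \<le> 2 * m" "y = 2 * int k - int (2 * m)"
      and pmf_y: "pmf (S_law (2 * m)) y = real ((2 * m) choose k) / 2 ^ (2 * m)"
    by (rule set_pmf_S_lawE)
  have "k \<noteq> m" using k assms by auto
  have le: "(2 * m) choose k \<le> (2 * m) choose (m + 1)"
  proof (cases "m < k")
    case True
    then show ?thesis using k by (intro binomial_antimono) auto
  next
    case False
    then have "(2 * m) choose (2 * m - k) \<le> (2 * m) choose (m + 1)"
      using \<open>k \<noteq> m\<close> by (intro binomial_antimono) auto
    then show ?thesis using binomial_symmetric[OF k(1)] by simp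
  qed
  have "(m + 1) * ((2 * m) choose (m + 1)) = m * ((2 * m) choose m)"
  proof -
    have "m * ((2 * m) choose m) = 2 * m * ((2 * m - 1) choose m)"
      using binomial_absorb_comp[of "2 * m" m] by simp
    with binomial_absorption[of m "2 * m"] show ?thesis by (metis Suc_eq_plus1)
  qed
  then have eq: "real ((2 * m) choose (m + 1)) = real ((2 * m) choose m) * m / (m + 1)"
    by (simp add: field_simps flip: of_nat_mult)
  have "pmf (S_law (2 * m)) y \<le> real ((2 * m) choose (m + 1)) / 2 ^ (2 * m)"
    unfolding pmf_y using le by (intro divide_right_mono) simp_all
  also have "\<dots> = central_prob m * m / (m + 1)"
    unfolding eq central_prob_def by (simp add: power_mult)
  finally show ?thesis .
qed (auto simp: set_pmf_iff intro!: divide_nonneg_nonneg mult_nonneg_nonneg less_imp_le[OF central_prob_pos])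

lemma pmf_S_law_even_neighbours_le:
  "pmf (S_law (2 * m)) (x - 1) * pmf (S_law (2 * m)) (x + 1) \<le> central_prob m ^ 2 * (real m / (real m + 1))"
proof -
  let ?c = "central_prob m"
  have "pmf (S_law (2 * m)) (x - 1) * pmf (S_law (2 * m)) (x + 1) \<le> ?c * (?c * m / (m + 1))"
  proof (cases "x - 1 = 0")
    case True
    then show ?thesis
      using pmf_S_law_le_central_prob[of "2 * m"] pmf_S_law_even_le[of "x + 1" m]
      by (intro mult_mono) (auto simp: central_prob_pos less_imp_le)
  next
    case False
    have "pmf (S_law (2 * m)) (x - 1) * pmf (S_law (2 * m)) (x + 1) \<le> (?c * m / (m + 1)) * ?c"
      using False pmf_S_law_le_central_prob[of "2 * m"] pmf_S_law_even_le[of "x - 1" m]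
      by (intro mult_mono) (auto simp: central_prob_pos less_imp_le)
    then show ?thesis by (simp add: ac_simps)
  qed
  then show ?thesis by (simp add: power2_eq_square ac_simps)
qed

lemma pmf_S_law_neighbours_le:
  assumes "1 \<le> n"
  shows "pmf (S_law n) (x - 1) * pmf (S_law n) (x + 1) \<le> 2 / (pi * (real n + 1))"
proof (cases "even n")
  case True
  then obtain m where n: "n = 2 * m" by blast
  have "pmf (S_law n) (x - 1) * pmf (S_law n) (x + 1) \<le> central_prob m ^ 2 * (real m / (real m + 1))"
    unfolding n by (rule pmf_S_law_even_neighbours_le)
  also have "\<dots> \<le> 1 / (pi * (m + 1/4)) * (real m / (real m + 1))"
    by (rule mult_right_mono[OF central_prob_sq_le]) simp
  also have "\<dots> = (real m / ((real m + 1/4) * (real m + 1))) / pi"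
    by simp
  also have "\<dots> \<le> (2 / (2 * real m + 1)) / pi"
  proof (rule divide_right_mono)
    have "0 < (real m + 1/4) * (real m + 1)" by (simp add: add_pos_nonneg)
    then show "real m / ((real m + 1/4) * (real m + 1)) \<le> 2 / (2 * real m + 1)"
      by (simp add: divide_simps algebra_simps)
  qed simp
  also have "\<dots> = 2 / (pi * (real n + 1))"
    unfolding n by simp
  finally show ?thesis .
next
  case False
  then obtain m where n: "n = 2 * m + 1" by (blast elim: oddE)
  let ?c = "central_prob (m + 1)"
  have "pmf (S_law n) (x - 1) * pmf (S_law n) (x + 1) \<le> ?c * ?c"
    using pmf_S_law_le_central_prob[of n] unfolding n
    by (intro mult_mono) (auto simp: central_prob_pos less_imp_le)
  also have "\<dots> \<le> 1 / (pi * (m + 1 + 1/4))"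
    using central_prob_sq_le[of "m + 1"] by (simp add: power2_eq_square)
  also have "\<dots> \<le> 1 / (pi * (real m + 1))"
    by (rule frac_le) auto
  also have "\<dots> = 2 / (pi * (real n + 1))"
    unfolding n by (simp add: divide_simps)
  finally show ?thesis .
qed

section \<open>One step of the walk\<close>

lemma one_minus_power_mult_le:
  fixes x :: real
  assumes "0 \<le> x" "x \<le> 1"
  shows "(1 - x) ^ n * (1 + n * x) \<le> 1"
proof -
  have "(1 - x) ^ n * (1 + n * x) \<le> (1 - x) ^ n * (1 + x) ^ n"
    using assms by (intro mult_left_mono Bernoulli_inequality) auto
  also have "\<dots> = (1 - x ^ 2) ^ n"
    by (simp add: power_mult_distrib[symmetric] power2_eq_square algebra_simps)
  also have "\<dots> \<le> 1"
    using assms by (intro power_le_one) (auto simp: power_le_one)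
  finally show ?thesis .
qed

lemma power_sq_minus_one_le:
  assumes "1 \<le> i"
  shows "(real i + 1) * (real i ^ 2 - 1) ^ i \<le> real i ^ (2 * i + 1)"
proof -
  define r where "r = real i"
  have r: "1 \<le> r" using assms unfolding r_def by simp
  have "(1 - 1 / r ^ 2) ^ i * (1 + i * (1 / r ^ 2)) \<le> 1"
    using r by (intro one_minus_power_mult_le) (auto simp: field_simps)
  moreover have "1 - 1 / r ^ 2 = (r ^ 2 - 1) / r ^ 2" "1 + i * (1 / r ^ 2) = (r + 1) / r"
    using r unfolding r_def by (simp_all add: field_simps power2_eq_square)
  ultimately have "(r ^ 2 - 1) ^ i * (r + 1) / (r * r ^ (2 * i)) \<le> 1"
    by (simp add: power_divide power_mult)
  then show ?thesis
    using r unfolding r_def[symmetric] by (subst (asm) divide_le_eq_1_pos) (auto simp: ac_simps)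
qed

lemma mult_one_minus_h2:
  fixes r :: real
  assumes "1 < r"
  shows "r * (1 - h2 ((r + 1) / (2 * r)))
    = (r + 1) / 2 * log 2 (r + 1) + (r - 1) / 2 * log 2 (r - 1) - r * log 2 r"
proof -
  have q: "1 - (r + 1) / (2 * r) = (r - 1) / (2 * r)" using assms by (simp add: field_simps)
  define L where "L x = log 2 x" for x
  have lp: "log 2 ((r + 1) / (2 * r)) = L (r + 1) - 1 - L r"
    and lq: "log 2 ((r - 1) / (2 * r)) = L (r - 1) - 1 - L r"
    unfolding L_def using assms by (simp_all add: log_divide log_mult)
  have "r * (1 - h2 ((r + 1) / (2 * r))) = (r + 1) / 2 * L (r + 1) + (r - 1) / 2 * L (r - 1) - r * L r"
    unfolding h2_def q lp lq using assms by (simp add: field_simps)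
  then show ?thesis unfolding L_def .
qed

definition cond_lower_exponent :: "nat \<Rightarrow> real" where
  "cond_lower_exponent i = -1 + real i * (1 - h2 ((real i + 1) / (2 * real i)))
     + (1/2) * log 2 ((pi / 2) * ((real i ^ 2 - 1) / real i))"

(* At i = 1 the paper's bound is 2 powr (-infinity) = 0; here log 2 0 = 0 makes the exponent 0. *)
lemma cond_lower_exponent_1: "cond_lower_exponent 1 = 0"
  unfolding cond_lower_exponent_def h2_def by (simp add: log_def)

lemma cond_lower_exponent_le:
  assumes "2 \<le> i"
  shows "2 * cond_lower_exponent i \<le> log 2 (pi * (real i + 1) / 8)"
proof -
  define r where "r = real i"
  have r: "2 \<le> r" using assms unfolding r_def by simp
  define L where "L x = log 2 x" for x
  have sq: "r ^ 2 - 1 = (r + 1) * (r - 1)" by (simp add: power2_eq_square algebra_simps)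
  have "1 < r ^ 2" using one_less_power[of r 2] r by simp
  then have "L ((r + 1) * ((r + 1) * (r - 1)) ^ i) \<le> L (r ^ (2 * i + 1))"
    using power_sq_minus_one_le[of i] assms r unfolding L_def r_def[symmetric] sq[symmetric]
    by (subst log_le_cancel_iff) auto
  moreover have "L ((r + 1) * ((r + 1) * (r - 1)) ^ i) = L (r + 1) + r * (L (r + 1) + L (r - 1))"
    unfolding L_def using r by (simp add: log_mult log_nat_power flip: r_def)
  moreover have "L (r ^ (2 * i + 1)) = (2 * r + 1) * L r"
    unfolding L_def using r by (simp add: log_mult log_nat_power algebra_simps flip: r_def)
  ultimately have key: "(r + 1) * L (r + 1) + r * L (r - 1) \<le> (2 * r + 1) * L r"
    by (simp add: algebra_simps)
  have h2: "r * (1 - h2 ((r + 1) / (2 * r)))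
      = ((r + 1) / 2) * L (r + 1) + ((r - 1) / 2) * L (r - 1) - r * L r"
    unfolding L_def using r by (intro mult_one_minus_h2) simp
  have lpi: "log 2 ((pi / 2) * ((r ^ 2 - 1) / r)) = L pi - 1 + L (r + 1) + L (r - 1) - L r"
  proof -
    have "(r ^ 2 - 1) / r = (r + 1) * (r - 1) / r" by (simp add: power2_eq_square algebra_simps)
    then show ?thesis unfolding L_def using r by (simp add: log_mult log_divide)
  qed
  have l8: "log 2 (pi * (r + 1) / 8) = L pi + L (r + 1) - 3"
  proof -
    have "log 2 (8::real) = 3" using log_pow_cancel[of 2 3] by simp
    then show ?thesis unfolding L_def using r by (simp add: log_mult log_divide)
  qed
  have "cond_lower_exponent i = -1 + r * (1 - h2 ((r + 1) / (2 * r)))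
      + (1/2) * log 2 ((pi / 2) * ((r ^ 2 - 1) / r))"
    unfolding cond_lower_exponent_def r_def ..
  then show ?thesis
    using key unfolding h2 lpi r_def[symmetric] l8 by (simp add: field_simps)
qed

lemma neighbours_pmf_product_le_exponent:
  assumes "1 \<le> i"
  shows "4 * (pmf (S_law i) (x - 1) * pmf (S_law i) (x + 1)) \<le> 2 powr (- 2 * cond_lower_exponent i)"
proof (cases "i = 1")
  case True
  have "pmf (S_law 1) y \<le> 1/2" for y
    using pmf_S_law_le_central_prob[of 1 y] by (simp add: central_prob_def)
  then have "pmf (S_law 1) (x - 1) * pmf (S_law 1) (x + 1) \<le> 1/2 * (1/2)"
    by (intro mult_mono) auto
  then show ?thesis unfolding True cond_lower_exponent_1 by simp
next
  case False
  then have "2 \<le> i" using assms by simp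
  have "4 * (pmf (S_law i) (x - 1) * pmf (S_law i) (x + 1)) \<le> 4 * (2 / (pi * (real i + 1)))"
    using pmf_S_law_neighbours_le[OF assms] by (rule mult_left_mono) simp
  also have "\<dots> = 2 powr (- log 2 (pi * (real i + 1) / 8))"
    by (simp add: powr_minus_divide add_pos_nonneg)
  also have "\<dots> \<le> 2 powr (- 2 * cond_lower_exponent i)"
    using cond_lower_exponent_le[OF \<open>2 \<le> i\<close>] by simp
  finally show ?thesis .
qed

lemma pmf_cond_step_law_Suc:
  assumes "x \<in> set_pmf (S_law n)"
  shows "pmf (cond_step_law (Suc n) x) y = (if y \<in> {x - 1, x + 1} then 1/2 else 0)"
proof -
  have "pmf (map_pmf (\<lambda>y. x + y) rademacher) (x + (y - x)) = pmf rademacher (y - x)"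
    by (rule pmf_map_inj') (auto simp: inj_def)
  then show ?thesis
    unfolding cond_step_law_Suc[OF assms] by (auto simp: pmf_rademacher)
qed

lemma set_pmf_cond_step_law_Suc:
  assumes "x \<in> set_pmf (S_law n)"
  shows "set_pmf (cond_step_law (Suc n) x) = {x - 1, x + 1}"
  unfolding cond_step_law_Suc[OF assms] by auto

lemma set_pmf_cond_step_law_Suc_subset:
  assumes "x \<in> set_pmf (S_law n)"
  shows "set_pmf (cond_step_law (Suc n) x) \<subseteq> set_pmf (S_law (Suc n))"
  using neighbours_in_set_S_law_Suc[OF assms] unfolding set_pmf_cond_step_law_Suc[OF assms] by auto

lemma H_div_cond_step_law_Suc:
  assumes "x \<in> set_pmf (S_law n)"
  shows "H_div \<alpha> (measure_pmf (cond_step_law (Suc n) x)) (measure_pmf (S_law (Suc n)))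
    = ((2 * pmf (S_law (Suc n)) (x - 1)) powr (1 - \<alpha>) + (2 * pmf (S_law (Suc n)) (x + 1)) powr (1 - \<alpha>)) / 2"
proof -
  have "(1/2) * ((1/2) / pmf (S_law (Suc n)) y) powr (\<alpha> - 1) = (2 * pmf (S_law (Suc n)) y) powr (1 - \<alpha>) / 2"
    if "y \<in> {x - 1, x + 1}" for y
  proof -
    let ?m = "pmf (S_law (Suc n)) y"
    have "0 < ?m"
      using that neighbours_in_set_S_law_Suc[OF assms] by (auto simp: pmf_positive)
    then have "((1/2) / ?m) powr (\<alpha> - 1) = 1 / (2 * ?m) powr (\<alpha> - 1)"
      by (simp add: powr_divide)
    moreover have "(2 * ?m) powr (1 - \<alpha>) = 1 / (2 * ?m) powr (\<alpha> - 1)"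
      using powr_minus_divide[of "2 * ?m" "\<alpha> - 1"] by simp
    ultimately show ?thesis by simp
  qed
  then show ?thesis
    unfolding H_div_measure_pmf[OF finite_set_pmf_S_law set_pmf_cond_step_law_Suc_subset[OF assms]]
      set_pmf_cond_step_law_Suc[OF assms] pmf_cond_step_law_Suc[OF assms]
    by (simp add: add_divide_distrib)
qed

lemma cond_step_law_H_div_root_le:
  assumes "1 \<le> \<alpha>" "x \<in> set_pmf (S_law n)"
  shows "H_div \<alpha> (measure_pmf (cond_step_law (Suc n) x)) (measure_pmf (S_law (Suc n))) powr (1 / \<alpha>)
    \<le> 2 powr (real (Suc n) * ((\<alpha> - 1) / \<alpha>) - 1 + 1 / \<alpha>)"
proof -
  have "pmf (cond_step_law (Suc n) x) y / pmf (S_law (Suc n)) y \<le> 2 ^ n"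
    if "y \<in> set_pmf (cond_step_law (Suc n) x)" for y
  proof -
    have "y \<in> set_pmf (S_law (Suc n))"
      using that set_pmf_cond_step_law_Suc_subset[OF assms(2)] by auto
    then have "1 / 2 ^ Suc n \<le> pmf (S_law (Suc n)) y" "0 < pmf (S_law (Suc n)) y"
      by (rule pmf_S_law_ge, simp add: pmf_positive)
    moreover have "pmf (cond_step_law (Suc n) x) y = 1/2"
      using that assms(2) by (simp add: pmf_cond_step_law_Suc set_pmf_cond_step_law_Suc)
    ultimately show ?thesis by (simp add: pos_divide_le_eq field_simps)
  qed
  then have "H_div \<alpha> (measure_pmf (cond_step_law (Suc n) x)) (measure_pmf (S_law (Suc n))) powr (1 / \<alpha>)
      \<le> (2 ^ n) powr ((\<alpha> - 1) / \<alpha>)"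
    using assms by (intro H_div_measure_pmf_root_le finite_set_pmf_S_law set_pmf_cond_step_law_Suc_subset)
  also have "\<dots> = 2 powr (real (Suc n) * ((\<alpha> - 1) / \<alpha>) - 1 + 1 / \<alpha>)"
    using assms(1) by (simp add: powr_realpow[symmetric] powr_powr field_simps)
  finally show ?thesis .
qed

lemma cond_step_law_H_div_root_ge:
  assumes "1 \<le> \<alpha>" "x \<in> set_pmf (S_law n)"
  shows "2 powr ((\<alpha> - 1) / \<alpha> * cond_lower_exponent (Suc n))
    \<le> H_div \<alpha> (measure_pmf (cond_step_law (Suc n) x)) (measure_pmf (S_law (Suc n))) powr (1 / \<alpha>)"
proof -
  let ?m = "\<lambda>y. pmf (S_law (Suc n)) y" and ?c = "cond_lower_exponent (Suc n)"
  have pos: "0 < ?m (x - 1)" "0 < ?m (x + 1)"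
    using neighbours_in_set_S_law_Suc[OF assms(2)] by (auto simp: pmf_positive)
  have "2 powr (?c * (\<alpha> - 1)) = (2 powr (- 2 * ?c)) powr ((1 - \<alpha>) / 2)"
    unfolding powr_powr by (rule arg_cong[where f = "\<lambda>t. 2 powr t"]) (simp add: field_simps)
  also have "\<dots> \<le> (4 * (?m (x - 1) * ?m (x + 1))) powr ((1 - \<alpha>) / 2)"
    using assms(1) pos neighbours_pmf_product_le_exponent[of "Suc n" x]
    by (intro powr_mono2') auto
  also have "\<dots> = sqrt ((2 * ?m (x - 1)) powr (1 - \<alpha>) * (2 * ?m (x + 1)) powr (1 - \<alpha>))"
    using pos by (simp add: powr_half_sqrt_powr powr_mult[symmetric])
  also have "\<dots> \<le> H_div \<alpha> (measure_pmf (cond_step_law (Suc n) x)) (measure_pmf (S_law (Suc n)))"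
    unfolding H_div_cond_step_law_Suc[OF assms(2)] by (rule arith_geo_mean_sqrt) simp_all
  finally have "(2 powr (?c * (\<alpha> - 1))) powr (1 / \<alpha>)
      \<le> H_div \<alpha> (measure_pmf (cond_step_law (Suc n) x)) (measure_pmf (S_law (Suc n))) powr (1 / \<alpha>)"
    using assms(1) by (intro powr_mono2) auto
  then show ?thesis by (simp add: powr_powr field_simps)
qed

lemma cond_step_law_H_div_root_bounds:
  assumes "1 \<le> \<alpha>" "1 \<le> i" "x \<in> set_pmf (S_law (i - 1))"
  shows "2 powr ((\<alpha> - 1) / \<alpha> * cond_lower_exponent i)
      \<le> H_div \<alpha> (measure_pmf (cond_step_law i x)) (measure_pmf (S_law i)) powr (1 / \<alpha>)"
    and "H_div \<alpha> (measure_pmf (cond_step_law i x)) (measure_pmf (S_law i)) powr (1 / \<alpha>)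
      \<le> 2 powr (real i * ((\<alpha> - 1) / \<alpha>) - 1 + 1 / \<alpha>)"
proof -
  obtain n where i: "i = Suc n" using assms(2) by (cases i) auto
  show "2 powr ((\<alpha> - 1) / \<alpha> * cond_lower_exponent i)
      \<le> H_div \<alpha> (measure_pmf (cond_step_law i x)) (measure_pmf (S_law i)) powr (1 / \<alpha>)"
    using cond_step_law_H_div_root_ge[OF assms(1)] assms(3) unfolding i by simp
  show "H_div \<alpha> (measure_pmf (cond_step_law i x)) (measure_pmf (S_law i)) powr (1 / \<alpha>)
      \<le> 2 powr (real i * ((\<alpha> - 1) / \<alpha>) - 1 + 1 / \<alpha>)"
    using cond_step_law_H_div_root_le[OF assms(1)] assms(3) unfolding i by simp
qed

section \<open>The whole path\<close>

lemma steps_eq_pmf_of_set: "steps n = pmf_of_set (PiE_dflt {..<n} 0 (\<lambda>_. {-1, 1}))"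
  unfolding steps_def rademacher_def by (rule Pi_pmf_of_set) auto

lemma set_pmf_steps: "set_pmf (steps n) = PiE_dflt {..<n} 0 (\<lambda>_. {-1, 1})"
  unfolding steps_eq_pmf_of_set by (rule set_pmf_of_set) auto

lemma pmf_steps:
  assumes "X \<in> set_pmf (steps n)"
  shows "pmf (steps n) X = 1 / 2 ^ n"
proof -
  let ?A = "PiE_dflt {..<n} 0 (\<lambda>_. {-1, 1 :: int})"
  have "card ?A = 2 ^ n"
    by (simp add: card_PiE_dflt numeral_2_eq_2)
  moreover have "X \<in> ?A" using assms by (simp add: set_pmf_steps)
  moreover have "finite ?A" "?A \<noteq> {}" by auto
  ultimately show ?thesis
    unfolding steps_eq_pmf_of_set by (simp add: pmf_of_set)
qed

definition walk_path :: "nat \<Rightarrow> (nat \<Rightarrow> int) \<Rightarrow> nat \<Rightarrow> int" where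
  "walk_path n X j = (if j \<in> {1..n} then walk X j else 0)"

lemma joint_law_eq_map_walk_path: "joint_law n = map_pmf (walk_path n) (steps n)"
  unfolding joint_law_def walk_path_def ..

lemma inj_on_walk_path: "inj_on (walk_path n) (set_pmf (steps n))"
proof (rule inj_onI)
  fix X Y assume XY: "X \<in> set_pmf (steps n)" "Y \<in> set_pmf (steps n)" "walk_path n X = walk_path n Y"
  have path: "walk_path n Z k = walk Z k" if "k \<le> n" for Z k
    using that unfolding walk_path_def by (cases k) (auto simp: walk_def)
  have "Z k = walk_path n Z (Suc k) - walk_path n Z k" if "k < n" for Z k
    using that by (simp add: path walk_Suc)
  then have "X k = Y k" if "k < n" for k
    using that XY(3) by metis
  moreover have "X k = Y k" if "n \<le> k" for k
    using that XY(1,2) by (simp add: set_pmf_steps PiE_dflt_def)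
  ultimately show "X = Y" by (meson ext not_less)
qed

lemma pmf_joint_law_walk_path:
  assumes "X \<in> set_pmf (steps n)"
  shows "pmf (joint_law n) (walk_path n X) = 1 / 2 ^ n"
  unfolding joint_law_eq_map_walk_path using assms
  by (simp add: pmf_map_inj[OF inj_on_walk_path] pmf_steps)

lemma pmf_prod_marg_law_walk_path:
  "pmf (prod_marg_law n) (walk_path n X) = (\<Prod>j\<in>{1..n}. pmf (S_law j) (walk X j))"
  unfolding prod_marg_law_def by (subst pmf_Pi') (auto simp: walk_path_def)

lemma finite_set_pmf_prod_marg_law: "finite (set_pmf (prod_marg_law n))"
  unfolding prod_marg_law_def by (auto simp: set_Pi_pmf)

lemma walk_path_in_set_pmf_prod_marg_law:
  assumes "X \<in> set_pmf (steps n)"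
  shows "walk_path n X \<in> set_pmf (prod_marg_law n)"
proof -
  have "walk X j \<in> set_pmf (S_law j)" if "j \<in> {1..n}" for j
    using assms that by (intro walk_in_set_pmf_S_law) (auto simp: set_pmf_steps PiE_dflt_def)
  then show ?thesis
    unfolding set_pmf_iff pmf_prod_marg_law_walk_path by auto
qed

lemma set_pmf_joint_law_subset: "set_pmf (joint_law n) \<subseteq> set_pmf (prod_marg_law n)"
  unfolding joint_law_eq_map_walk_path using walk_path_in_set_pmf_prod_marg_law by auto

lemma prod_pmf_S_law_ge:
  assumes "\<And>j. j \<in> {1..n} \<Longrightarrow> f j \<in> set_pmf (S_law j)"
  shows "2 powr (- (real n * (real n + 1) / 2)) \<le> (\<Prod>j\<in>{1..n}. pmf (S_law j) (f j))"
proof -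
  have "(\<Sum>j\<in>{1..n}. real j) = real n * (real n + 1) / 2"
    using double_gauss_sum_from_Suc_0[of n, where 'a = real, folded One_nat_def] by linarith
  then have "2 powr (- (real n * (real n + 1) / 2)) = 2 powr (\<Sum>j\<in>{1..n}. - real j)"
    by (simp only: sum_negf)
  also have "\<dots> = (\<Prod>j\<in>{1..n}. 1 / 2 ^ j)"
    by (simp add: powr_sum powr_minus_divide powr_realpow)
  also have "\<dots> \<le> (\<Prod>j\<in>{1..n}. pmf (S_law j) (f j))"
    using assms by (intro prod_mono) (auto simp: pmf_S_law_ge)
  finally show ?thesis .
qed

lemma prod_pmf_S_law_le:
  assumes "2 \<le> n"
  shows "(\<Prod>j\<in>{1..n}. pmf (S_law j) (f j)) \<le> 1/4 * (3/8) ^ (n - 2)"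
proof -
  have le_half: "pmf (S_law j) y \<le> 1/2" if "j \<in> {1, 2}" for j y
    using that pmf_S_law_le_central_prob[of j y] by (auto simp: central_prob_def)
  have le_three_eighths: "pmf (S_law j) y \<le> 3/8" if "3 \<le> j" for j y
  proof -
    have "central_prob ((j + 1) div 2) \<le> central_prob 2"
      using that by (intro decseqD[OF decseq_central_prob]) simp
    then show ?thesis using pmf_S_law_le_central_prob[of j y] by (simp add: central_prob_2)
  qed
  have "{1..n} = {1, 2} \<union> {3..n}" using assms by auto
  then have "(\<Prod>j\<in>{1..n}. pmf (S_law j) (f j))
      = (\<Prod>j\<in>{1, 2}. pmf (S_law j) (f j)) * (\<Prod>j\<in>{3..n}. pmf (S_law j) (f j))"
    by (simp add: prod.union_disjoint)
  also have "\<dots> \<le> (1/2 * (1/2)) * (\<Prod>j\<in>{3..n}. 3/8)"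
  proof (rule mult_mono)
    have "(\<Prod>j\<in>{1, 2}. pmf (S_law j) (f j)) = pmf (S_law 1) (f 1) * pmf (S_law 2) (f 2)"
      by simp
    also have "\<dots> \<le> 1/2 * (1/2)"
      by (rule mult_mono) (use le_half in auto)
    finally show "(\<Prod>j\<in>{1, 2}. pmf (S_law j) (f j)) \<le> 1/2 * (1/2)" .
    show "(\<Prod>j\<in>{3..n}. pmf (S_law j) (f j)) \<le> (\<Prod>j\<in>{3..n}. 3/8)"
      using le_three_eighths by (intro prod_mono) auto
  qed (auto intro: prod_nonneg)
  finally show ?thesis by simp
qed

lemma joint_law_ratio_le:
  assumes "s \<in> set_pmf (joint_law n)"
  shows "pmf (joint_law n) s / pmf (prod_marg_law n) s \<le> 2 powr (real n * (real n - 1) / 2)"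
proof -
  obtain X where X: "X \<in> set_pmf (steps n)" and s: "s = walk_path n X"
    using assms unfolding joint_law_eq_map_walk_path by auto
  let ?q = "\<Prod>j\<in>{1..n}. pmf (S_law j) (walk X j)"
  have q: "2 powr (- (real n * (real n + 1) / 2)) \<le> ?q"
    using X by (intro prod_pmf_S_law_ge walk_in_set_pmf_S_law) (auto simp: set_pmf_steps PiE_dflt_def)
  have "0 < ?q" by (rule less_le_trans[OF _ q]) simp
  with q have "2 powr (- real n) / ?q \<le> 2 powr (- real n) / 2 powr (- (real n * (real n + 1) / 2))"
    by (intro divide_left_mono) auto
  also have "\<dots> = 2 powr (real n * (real n - 1) / 2)"
    by (simp add: powr_diff[symmetric] algebra_simps add_divide_distrib diff_divide_distrib)
  finally show ?thesis
    unfolding s pmf_joint_law_walk_path[OF X] pmf_prod_marg_law_walk_path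
    by (simp add: powr_minus_divide powr_realpow)
qed

lemma joint_law_ratio_ge:
  assumes "2 \<le> n" "s \<in> set_pmf (joint_law n)"
  shows "2 powr ((real n - 2) / 4) \<le> pmf (joint_law n) s / pmf (prod_marg_law n) s"
proof -
  obtain X where X: "X \<in> set_pmf (steps n)" and s: "s = walk_path n X"
    using assms unfolding joint_law_eq_map_walk_path by auto
  let ?q = "\<Prod>j\<in>{1..n}. pmf (S_law j) (walk X j)"
  have "0 < ?q"
    using pmf_positive[OF walk_path_in_set_pmf_prod_marg_law[OF X]] unfolding pmf_prod_marg_law_walk_path .
  have "2 powr (1/4) \<le> (4/3 :: real)"
  proof -
    have "(2 powr (1/4)) ^ 4 = (2 :: real)" by (simp add: powr_power)
    then have "(2 powr (1/4)) ^ 4 \<le> (4/3 :: real) ^ 4" by (simp add: power_divide)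
    then show ?thesis by (subst (asm) power_mono_iff) auto
  qed
  have "2 powr ((real n - 2) / 4) = (2 powr (1/4)) ^ (n - 2)"
    using assms(1) by (simp add: powr_power of_nat_diff)
  also have "\<dots> \<le> (4/3) ^ (n - 2)"
    by (rule power_mono) (use \<open>2 powr (1/4) \<le> 4/3\<close> in auto)
  also have "\<dots> = (1 / 2 ^ n) / (1/4 * (3/8) ^ (n - 2))"
  proof -
    obtain k where "n = k + 2" using assms(1) by (metis add.commute le_Suc_ex)
    moreover have "(8::real) ^ k = 2 ^ k * 4 ^ k" by (simp flip: power_mult_distrib)
    ultimately show ?thesis by (simp add: power_add power_divide field_simps)
  qed
  also have "\<dots> \<le> (1 / 2 ^ n) / ?q"
    using \<open>0 < ?q\<close> prod_pmf_S_law_le[OF assms(1)] by (intro divide_left_mono) auto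
  finally show ?thesis
    unfolding s pmf_joint_law_walk_path[OF X] pmf_prod_marg_law_walk_path .
qed

lemma joint_law_log_H_div_root_bounds:
  assumes "1 \<le> \<alpha>" "2 \<le> n"
  defines "H \<equiv> H_div \<alpha> (measure_pmf (joint_law n)) (measure_pmf (prod_marg_law n)) powr (1 / \<alpha>)"
  shows "(real n - 2) * ((\<alpha> - 1) / \<alpha>) / 4 \<le> log 2 H"
    and "log 2 H \<le> real n * (real n - 1) * ((\<alpha> - 1) / \<alpha>) / 2"
proof -
  have lower: "2 powr ((real n - 2) * ((\<alpha> - 1) / \<alpha>) / 4) \<le> H"
    using H_div_measure_pmf_root_ge[OF finite_set_pmf_prod_marg_law set_pmf_joint_law_subset assms(1) _
        joint_law_ratio_ge[OF assms(2)]]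
    unfolding H_def by (simp add: powr_powr ac_simps)
  have upper: "H \<le> 2 powr (real n * (real n - 1) * ((\<alpha> - 1) / \<alpha>) / 2)"
    using H_div_measure_pmf_root_le[OF finite_set_pmf_prod_marg_law set_pmf_joint_law_subset assms(1)
        joint_law_ratio_le]
    unfolding H_def by (simp add: powr_powr ac_simps)
  have "0 < H" by (rule less_le_trans[OF _ lower]) simp
  then show "(real n - 2) * ((\<alpha> - 1) / \<alpha>) / 4 \<le> log 2 H"
    and "log 2 H \<le> real n * (real n - 1) * ((\<alpha> - 1) / \<alpha>) / 2"
    using lower upper by (simp_all add: le_log_iff log_le_iff)
qed

theorem lemma1:
  fixes \<alpha> :: real
  assumes "\<alpha> \<ge> 1"
  shows "(\<forall>i x. i \<ge> 1 \<and> x \<in> set_pmf (S_law (i - 1)) \<longrightarrow>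
            2 powr (((\<alpha> - 1) / \<alpha>) * (-1 + real i * (1 - h2 ((real i + 1) / (2 * real i)))
                 + (1/2) * log 2 ((pi / 2) * ((real i ^ 2 - 1) / real i))))
              \<le> H_div \<alpha> (measure_pmf (cond_step_law i x)) (measure_pmf (S_law i)) powr (1 / \<alpha>)
            \<and> H_div \<alpha> (measure_pmf (cond_step_law i x)) (measure_pmf (S_law i)) powr (1 / \<alpha>)
              \<le> 2 powr (real i * ((\<alpha> - 1) / \<alpha>) - 1 + 1 / \<alpha>))
       \<and> (\<forall>n::nat. n \<ge> 2 \<longrightarrow>
            (real n - 2) * ((\<alpha> - 1) / \<alpha>) / 4
              \<le> log 2 (H_div \<alpha> (measure_pmf (joint_law n)) (measure_pmf (prod_marg_law n)) powr (1 / \<alpha>))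
            \<and> log 2 (H_div \<alpha> (measure_pmf (joint_law n)) (measure_pmf (prod_marg_law n)) powr (1 / \<alpha>))
              \<le> real n * (real n - 1) * ((\<alpha> - 1) / \<alpha>) / 2)"
  using cond_step_law_H_div_root_bounds[OF assms] joint_law_log_H_div_root_bounds[OF assms]
  unfolding cond_lower_exponent_def by blast

end
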